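(* Let $f:G\to H$, $f':G'\to H'$, $\varphi':G'\to G$ and $\varphi:H'\to H$ be group homomorphisms with $f\circ\varphi'=\varphi\circ f'$, and suppose this square is a weak pullback. If $\varphi$ is surjective or $f'$ does not admit a global section, then $\mathrm{sec}(f')\leq \mathrm{sec}(f)$.
   Context: The commutative square $f\circ\varphi'=\varphi\circ f'$ is a weak pullback if for every group $L$ and homomorphisms $\alpha:L\to H'$, $\beta:L\to G$ with $\varphi\circ\alpha=f\circ\beta$, there exists a (not necessarily unique) homomorphism $h:L\to G'$ with $f'\circ h=\alpha$ and $\varphi'\circ h=\beta$. For a homomorphism $f:G\to H$ and a subgroup $L\le H$, a local section of $f$ on $L$ is a homomorphism $s:L\to G$ with $f\circ s=\mathrm{incl}_L$ (the inclusion $L\hookrightarrow H$); a global section is a local section on $L=H$. The sectional number $\mathrm{sec}(f)$ is the least positive integer $m$ such that there exist proper subgroups $H_1,\ldots,H_m$ of $H$ with $H=H_1\cup\cdots\cup H_m$ and such that $f$ admits a local section on each $H_i$; $\mathrm{sec}(f)=\infty$ if no such $m$ exists. *)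

theory Defs
  imports "HOL-Algebra.Algebra" "HOL-Library.Extended_Nat"
begin

definition local_section ::
  "('a, 'm) monoid_scheme \<Rightarrow> ('b, 'n) monoid_scheme \<Rightarrow> ('a \<Rightarrow> 'b) \<Rightarrow> 'b set \<Rightarrow> ('b \<Rightarrow> 'a) \<Rightarrow> bool"
  where "local_section G H f L s \<longleftrightarrow>
           subgroup L H \<and> s \<in> hom (H\<lparr>carrier := L\<rparr>) G \<and> (\<forall>x\<in>L. f (s x) = x)"

definition has_local_section ::
  "('a, 'm) monoid_scheme \<Rightarrow> ('b, 'n) monoid_scheme \<Rightarrow> ('a \<Rightarrow> 'b) \<Rightarrow> 'b set \<Rightarrow> bool"
  where "has_local_section G H f L \<longleftrightarrow> (\<exists>s. local_section G H f L s)"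

definition has_global_section ::
  "('a, 'm) monoid_scheme \<Rightarrow> ('b, 'n) monoid_scheme \<Rightarrow> ('a \<Rightarrow> 'b) \<Rightarrow> bool"
  where "has_global_section G H f \<longleftrightarrow> has_local_section G H f (carrier H)"

definition sec_cover ::
  "('a, 'm) monoid_scheme \<Rightarrow> ('b, 'n) monoid_scheme \<Rightarrow> ('a \<Rightarrow> 'b) \<Rightarrow> nat \<Rightarrow> bool"
  where "sec_cover G H f m \<longleftrightarrow>
           (\<exists>Hs :: nat \<Rightarrow> 'b set.
              (\<forall>i<m. subgroup (Hs i) H \<and> Hs i \<noteq> carrier H \<and> has_local_section G H f (Hs i))
              \<and> (\<Union>i<m. Hs i) = carrier H)"

text \<open>Sectional number; \<infinity> (Inf of the empty set in enat) if no such m exists.\<close>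
definition sectional_number ::
  "('a, 'm) monoid_scheme \<Rightarrow> ('b, 'n) monoid_scheme \<Rightarrow> ('a \<Rightarrow> 'b) \<Rightarrow> enat"
  where "sectional_number G H f = Inf {enat m | m. 0 < m \<and> sec_cover G H f m}"

text \<open>Weak pullback property of the square  f \<circ> phi' = phi \<circ> f'  (G' \<rightarrow> G \<rightarrow> H, G' \<rightarrow> H' \<rightarrow> H),
  tested against all groups L whose elements live in the type 'l.\<close>
definition weak_pullback ::
  "'l itself \<Rightarrow> ('a, 'm1) monoid_scheme \<Rightarrow> ('b, 'm2) monoid_scheme \<Rightarrow>
   ('c, 'm3) monoid_scheme \<Rightarrow> ('d, 'm4) monoid_scheme \<Rightarrow>
   ('a \<Rightarrow> 'b) \<Rightarrow> ('c \<Rightarrow> 'd) \<Rightarrow> ('c \<Rightarrow> 'a) \<Rightarrow> ('d \<Rightarrow> 'b) \<Rightarrow> bool"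
  where "weak_pullback (_ :: 'l itself) G H G' H' f f' \<phi>' \<phi> \<longleftrightarrow>
    (\<forall>(L :: 'l monoid) \<alpha> \<beta>. group L \<and> \<alpha> \<in> hom L H' \<and> \<beta> \<in> hom L G \<and>
        (\<forall>x\<in>carrier L. \<phi> (\<alpha> x) = f (\<beta> x)) \<longrightarrow>
      (\<exists>h \<in> hom L G'. \<forall>x\<in>carrier L. f' (h x) = \<alpha> x \<and> \<phi>' (h x) = \<beta> x))"

end

theory Submission
  imports Defs
begin

text \<open>Pull the covering subgroups K of H back along \<phi> to K' = \<phi>\<inverse>(K). If s is a local section
  of f on K, then the inclusion K' \<rightarrow> H' and s \<circ> \<phi> : K' \<rightarrow> G agree over H, so the weak pullback
  property yields a local section of f' on K'. The preimages of a cover of H cover H', and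
  K' can only be all of H' if f' has a global section and \<phi> maps H' into the proper
  subgroup K, which the disjunctive hypothesis excludes. Hence every cover witnessing
  sec(f) \<le> m gives one witnessing sec(f') \<le> m.\<close>

lemma (in group_hom) subgroup_vimage:
  assumes "subgroup K H"
  shows "subgroup {x \<in> carrier G. h x \<in> K} G"
  using assms by unfold_locales (auto intro: subgroup.m_closed subgroup.one_closed subgroup.m_inv_closed)

lemma subgroup_incl_hom: "subgroup K H \<Longrightarrow> id \<in> hom (H\<lparr>carrier := K\<rparr>) H"
  by (auto simp: hom_def dest: subgroup.mem_carrier)

lemma hom_restrict_carriers:
  assumes "h \<in> hom G H" "K' \<subseteq> carrier G" "h ` K' \<subseteq> K"
  shows "h \<in> hom (G\<lparr>carrier := K'\<rparr>) (H\<lparr>carrier := K\<rparr>)"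
  using assms by (auto simp: hom_def Pi_def subset_iff)

lemma weak_pullback_local_section:
  fixes H' :: "'d monoid"
  assumes "group H" "group H'" "\<phi> \<in> hom H' H"
    and wp: "weak_pullback TYPE('d) G H G' H' f f' \<phi>' \<phi>"
    and "subgroup K H" and "has_local_section G H f K"
  shows "has_local_section G' H' f' {x \<in> carrier H'. \<phi> x \<in> K}"
proof -
  define K' where "K' = {x \<in> carrier H'. \<phi> x \<in> K}"
  define L where "L = H'\<lparr>carrier := K'\<rparr>"
  obtain s where s: "local_section G H f K s"
    using assms(6) unfolding has_local_section_def by blast
  have K': "subgroup K' H'"
    unfolding K'_def using assms(1-3,5)
    by (intro group_hom.subgroup_vimage) (auto simp: group_hom_def group_hom_axioms_def)
  have "group L"
    unfolding L_def using K' assms(2) by (rule subgroup.subgroup_is_group)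
  moreover have "id \<in> hom L H'"
    unfolding L_def using K' by (rule subgroup_incl_hom)
  moreover have "s \<circ> \<phi> \<in> hom L G"
  proof (rule hom_compose)
    show "\<phi> \<in> hom L (H\<lparr>carrier := K\<rparr>)"
      unfolding L_def K'_def using assms(3) by (rule hom_restrict_carriers) auto
    show "s \<in> hom (H\<lparr>carrier := K\<rparr>) G"
      using s by (simp add: local_section_def)
  qed
  moreover have "\<forall>x\<in>carrier L. \<phi> (id x) = f ((s \<circ> \<phi>) x)"
    using s by (simp add: L_def K'_def local_section_def)
  ultimately obtain h where "h \<in> hom L G'" "\<forall>x\<in>carrier L. f' (h x) = x"
    using wp unfolding weak_pullback_def by fastforce
  then have "local_section G' H' f' K' h"
    using K' by (simp add: local_section_def L_def)
  then show ?thesis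
    unfolding has_local_section_def K'_def by blast
qed

lemma sec_cover_weak_pullback:
  fixes H' :: "'d monoid"
  assumes "group H" "group H'" "\<phi> \<in> hom H' H"
    and "weak_pullback TYPE('d) G H G' H' f f' \<phi>' \<phi>"
    and "\<phi> ` carrier H' = carrier H \<or> \<not> has_global_section G' H' f'"
    and "sec_cover G H f m"
  shows "sec_cover G' H' f' m"
proof -
  obtain Hs where Hs: "\<And>i. i < m \<Longrightarrow>
      subgroup (Hs i) H \<and> Hs i \<noteq> carrier H \<and> has_local_section G H f (Hs i)"
    and cover: "(\<Union>i<m. Hs i) = carrier H"
    using assms(6) unfolding sec_cover_def by blast
  define Hs' where "Hs' i = {x \<in> carrier H'. \<phi> x \<in> Hs i}" for i
  have "subgroup (Hs' i) H' \<and> Hs' i \<noteq> carrier H' \<and> has_local_section G' H' f' (Hs' i)"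
    if "i < m" for i
  proof (intro conjI)
    show "subgroup (Hs' i) H'"
      unfolding Hs'_def using assms(1-3) Hs[OF that]
      by (intro group_hom.subgroup_vimage) (auto simp: group_hom_def group_hom_axioms_def)
    show sect: "has_local_section G' H' f' (Hs' i)"
      unfolding Hs'_def using Hs[OF that] by (intro weak_pullback_local_section[OF assms(1-4)]) auto
    show "Hs' i \<noteq> carrier H'"
    proof
      assume full: "Hs' i = carrier H'"
      then have "has_global_section G' H' f'"
        using sect by (simp add: has_global_section_def)
      then have "carrier H = \<phi> ` carrier H'"
        using assms(5) by simp
      also have "\<dots> \<subseteq> Hs i"
        using full by (auto simp: Hs'_def)
      finally show False
        using Hs[OF that] subgroup.subset by blast
    qed
  qed
  moreover have "(\<Union>i<m. Hs' i) = carrier H'"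
    using cover hom_in_carrier[OF assms(3)] by (auto simp: Hs'_def)
  ultimately show ?thesis
    unfolding sec_cover_def by blast
qed

lemma sectional_number_le:
  assumes "\<And>m. sec_cover G H f m \<Longrightarrow> sec_cover G' H' f' m"
  shows "sectional_number G' H' f' \<le> sectional_number G H f"
  unfolding sectional_number_def using assms by (blast intro: Inf_superset_mono)

theorem theorem3p2:
  fixes G :: "'a monoid" and H :: "'b monoid" and G' :: "'c monoid" and H' :: "'d monoid"
    and f :: "'a \<Rightarrow> 'b" and f' :: "'c \<Rightarrow> 'd" and \<phi>' :: "'c \<Rightarrow> 'a" and \<phi> :: "'d \<Rightarrow> 'b"
  assumes "group G" and "group H" and "group G'" and "group H'"
    and "f \<in> hom G H" and "f' \<in> hom G' H'" and "\<phi>' \<in> hom G' G" and "\<phi> \<in> hom H' H"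
    and "\<forall>x\<in>carrier G'. f (\<phi>' x) = \<phi> (f' x)"
    and "weak_pullback TYPE('d) G H G' H' f f' \<phi>' \<phi>"
    and "\<phi> ` carrier H' = carrier H \<or> \<not> has_global_section G' H' f'"
  shows "sectional_number G' H' f' \<le> sectional_number G H f"
  using sec_cover_weak_pullback[OF assms(2,4,8,10,11)] by (rule sectional_number_le)

end
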